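(* Let $X$ be a spectral space whose specialization order is total, and let $Y\subseteq X$. Then: (1) $\mathrm{Cl}^\mathrm{cons}(Y)=Y_\infty\cup Y_{(\infty)}$; (2) $Y$ is closed in the constructible topology if and only if the supremum and the infimum of every nonempty subset of $Y$ belong to $Y$.
   Context: A spectral space is a topological space homeomorphic to the prime spectrum of a commutative ring with the Zariski topology. The specialization order is $x\leq y$ iff $y\in\mathrm{Cl}(\{x\})$; suprema and infima refer to it. The constructible topology is the coarsest topology in which all open quasi-compact subsets of $X$ are clopen; $\mathrm{Cl}^\mathrm{cons}$ is closure in it. $Y_\infty$ (resp. $Y_{(\infty)}$) is the set of suprema (resp. infima) in $X$ of nonempty subsets of $Y$ (whenever they exist). *)

theory Defs
  imports "HOL-Analysis.Analysis" "HOL-Algebra.Ideal"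
begin

definition Spec :: "('r, 'm) ring_scheme \<Rightarrow> 'r set set" where
  "Spec R = {P. primeideal P R}"

definition zariski_topology :: "('r, 'm) ring_scheme \<Rightarrow> 'r set topology" where
  "zariski_topology R =
     topology_generated_by {{P \<in> Spec R. f \<notin> P} | f. f \<in> carrier R}"

definition spec_le :: "'a topology \<Rightarrow> 'a \<Rightarrow> 'a \<Rightarrow> bool" where
  "spec_le X x y \<longleftrightarrow> x \<in> topspace X \<and> y \<in> topspace X \<and> y \<in> X closure_of {x}"

definition spec_order_total :: "'a topology \<Rightarrow> bool" where
  "spec_order_total X \<longleftrightarrow> (\<forall>x\<in>topspace X. \<forall>y\<in>topspace X. spec_le X x y \<or> spec_le X y x)"

definition is_sup_in :: "'a topology \<Rightarrow> 'a set \<Rightarrow> 'a \<Rightarrow> bool" where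
  "is_sup_in X S s \<longleftrightarrow> s \<in> topspace X \<and> (\<forall>y\<in>S. spec_le X y s) \<and>
     (\<forall>z\<in>topspace X. (\<forall>y\<in>S. spec_le X y z) \<longrightarrow> spec_le X s z)"

definition is_inf_in :: "'a topology \<Rightarrow> 'a set \<Rightarrow> 'a \<Rightarrow> bool" where
  "is_inf_in X S s \<longleftrightarrow> s \<in> topspace X \<and> (\<forall>y\<in>S. spec_le X s y) \<and>
     (\<forall>z\<in>topspace X. (\<forall>y\<in>S. spec_le X z y) \<longrightarrow> spec_le X z s)"

text \<open>Y_\<infinity>: suprema in X of nonempty subsets of Y (when they exist).\<close>
definition sups_of :: "'a topology \<Rightarrow> 'a set \<Rightarrow> 'a set" where
  "sups_of X Y = {s. \<exists>S. S \<subseteq> Y \<and> S \<noteq> {} \<and> is_sup_in X S s}"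

text \<open>Y_(\<infinity>): infima in X of nonempty subsets of Y (when they exist).\<close>
definition infs_of :: "'a topology \<Rightarrow> 'a set \<Rightarrow> 'a set" where
  "infs_of X Y = {s. \<exists>S. S \<subseteq> Y \<and> S \<noteq> {} \<and> is_inf_in X S s}"

definition cons_topology :: "'a topology \<Rightarrow> 'a topology" where
  "cons_topology X = topology_generated_by
     ({U. openin X U \<and> compactin X U} \<union> {topspace X - U | U. openin X U \<and> compactin X U})"

end

theory Submission
  imports Defs "HOL-Algebra.Ring_Divisibility"
begin

(* The constructible topology is generated by the compact opens and their complements, so a
   filter converges to l in it iff it eventually lies in each compact open containing l and
   eventually avoids each compact open missing l.  For a nonempty chain S, the upper tails of S
   converge in this sense to sup S, because by compactness a compact open containing S contains
   sup S; the lower tails converge to inf S, because in Spec R the intersection of a chain of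
   primes lies in the Zariski closure of the chain.  Conversely, if x is neither the supremum of
   the points of Y below it nor the infimum of those above it, then T0 and the separation of points
   by compact opens give a constructible neighbourhood of x missing Y. *)

section \<open>Specialization order\<close>

lemma spec_le_iff_openin:
  "spec_le X x y \<longleftrightarrow> x \<in> topspace X \<and> y \<in> topspace X \<and> (\<forall>U. openin X U \<and> y \<in> U \<longrightarrow> x \<in> U)"
  unfolding spec_le_def in_closure_of by blast

lemma spec_le_refl: "x \<in> topspace X \<Longrightarrow> spec_le X x x"
  by (simp add: spec_le_iff_openin)

lemma spec_le_trans: "spec_le X x y \<Longrightarrow> spec_le X y z \<Longrightarrow> spec_le X x z"
  by (simp add: spec_le_iff_openin)

lemma openin_spec_le_down: "openin X U \<Longrightarrow> spec_le X x y \<Longrightarrow> y \<in> U \<Longrightarrow> x \<in> U"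
  by (simp add: spec_le_iff_openin)

lemma continuous_map_spec_le:
  assumes "continuous_map X Y f" and "spec_le X x y"
  shows "spec_le Y (f x) (f y)"
  using assms by (auto simp: spec_le_iff_openin continuous_map)

lemma t0_space_iff_spec_le_antisym:
  "t0_space X \<longleftrightarrow> (\<forall>x y. spec_le X x y \<longrightarrow> spec_le X y x \<longrightarrow> x = y)"
proof
  assume "t0_space X"
  then show "\<forall>x y. spec_le X x y \<longrightarrow> spec_le X y x \<longrightarrow> x = y"
    unfolding t0_space_def spec_le_iff_openin by metis
next
  assume antisym: "\<forall>x y. spec_le X x y \<longrightarrow> spec_le X y x \<longrightarrow> x = y"
  show "t0_space X"
    unfolding t0_space_def
  proof (intro ballI impI)
    fix x y assume "x \<in> topspace X" "y \<in> topspace X" "x \<noteq> y"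
    then have "\<not> spec_le X x y \<or> \<not> spec_le X y x" using antisym by blast
    then show "\<exists>U. openin X U \<and> (x \<notin> U \<longleftrightarrow> y \<in> U)"
      using \<open>x \<in> topspace X\<close> \<open>y \<in> topspace X\<close> unfolding spec_le_iff_openin by blast
  qed
qed

lemma limitin_topology_generated_by:
  assumes "l \<in> \<Union>B" and basis: "\<And>b. b \<in> B \<Longrightarrow> l \<in> b \<Longrightarrow> eventually (\<lambda>x. f x \<in> b) F"
  shows "limitin (topology_generated_by B) f l F"
proof -
  have "eventually (\<lambda>x. f x \<in> U) F" if "generate_topology_on B U" "l \<in> U" for U
    using that
  proof (induction rule: generate_topology_on.induct)
    case (Int a b)
    then show ?case by (simp add: eventually_conj)
  next
    case (UN K)
    then obtain k where "k \<in> K" "l \<in> k" by blast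
    with UN.IH show ?case by (blast intro: eventually_mono)
  qed (use basis in auto)
  with assms(1) show ?thesis
    by (simp add: limitin_def openin_topology_generated_by_iff)
qed

lemma limitin_imp_in_closure_of:
  assumes "limitin X f l F" and "eventually (\<lambda>x. f x \<in> S) F" and "F \<noteq> bot"
  shows "l \<in> X closure_of S"
proof -
  have "\<exists>y. y \<in> S \<and> y \<in> T" if "openin X T" "l \<in> T" for T
  proof -
    have "eventually (\<lambda>x. f x \<in> T) F"
      using assms(1) that by (rule limitinD)
    with assms(2) have "eventually (\<lambda>x. f x \<in> S \<and> f x \<in> T) F"
      by (rule eventually_conj)
    then show ?thesis
      using eventually_happens'[OF assms(3)] by blast
  qed
  then show ?thesis
    using limitin_topspace[OF assms(1)] by (auto simp: in_closure_of)
qed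

section \<open>Tails of chains\<close>

definition tail_filter :: "('a \<Rightarrow> 'a \<Rightarrow> bool) \<Rightarrow> 'a set \<Rightarrow> 'a filter" where
  "tail_filter r S = (INF y\<in>S. principal {z \<in> S. r y z})"

lemma
  assumes "S \<noteq> {}"
    and total: "\<And>y z. y \<in> S \<Longrightarrow> z \<in> S \<Longrightarrow> r y z \<or> r z y"
    and trans: "\<And>x y z. x \<in> S \<Longrightarrow> y \<in> S \<Longrightarrow> z \<in> S \<Longrightarrow> r x y \<Longrightarrow> r y z \<Longrightarrow> r x z"
  shows eventually_tail_filter: "eventually P (tail_filter r S) \<longleftrightarrow> (\<exists>y\<in>S. \<forall>z\<in>S. r y z \<longrightarrow> P z)"
    and tail_filter_not_bot: "tail_filter r S \<noteq> bot"
proof -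
  have le: "principal {z \<in> S. r b z} \<le> inf (principal {z \<in> S. r a z}) (principal {z \<in> S. r b z})"
    if "a \<in> S" "b \<in> S" "r a b" for a b
    using trans[OF that(1,2) _ that(3)] by (auto simp: inf_principal)
  have base: "\<exists>x\<in>S. principal {z \<in> S. r x z} \<le> inf (principal {z \<in> S. r a z}) (principal {z \<in> S. r b z})"
    if "a \<in> S" "b \<in> S" for a b
    using total[OF that] le[OF that] le[OF that(2,1)] that by (metis inf_commute)
  show *: "eventually P (tail_filter r S) \<longleftrightarrow> (\<exists>y\<in>S. \<forall>z\<in>S. r y z \<longrightarrow> P z)" for P
    unfolding tail_filter_def
    by (simp add: eventually_INF_base[where F = "\<lambda>y. principal {z \<in> S. r y z}", OF assms(1) base]
        eventually_principal Ball_def conj_commute imp_conjL)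
  show "tail_filter r S \<noteq> bot"
    unfolding trivial_limit_def * using total by blast
qed

abbreviation upper_tails :: "'a topology \<Rightarrow> 'a set \<Rightarrow> 'a filter" where
  "upper_tails X S \<equiv> tail_filter (spec_le X) S"

abbreviation lower_tails :: "'a topology \<Rightarrow> 'a set \<Rightarrow> 'a filter" where
  "lower_tails X S \<equiv> tail_filter (\<lambda>y z. spec_le X z y) S"

lemma
  assumes "spec_order_total X" and "S \<subseteq> topspace X" and "S \<noteq> {}"
  shows eventually_upper_tails:
      "eventually P (upper_tails X S) \<longleftrightarrow> (\<exists>y\<in>S. \<forall>z\<in>S. spec_le X y z \<longrightarrow> P z)"
    and eventually_lower_tails:
      "eventually P (lower_tails X S) \<longleftrightarrow> (\<exists>y\<in>S. \<forall>z\<in>S. spec_le X z y \<longrightarrow> P z)"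
    and upper_tails_not_bot: "upper_tails X S \<noteq> bot"
    and lower_tails_not_bot: "lower_tails X S \<noteq> bot"
proof -
  have total: "spec_le X y z \<or> spec_le X z y" if "y \<in> S" "z \<in> S" for y z
    using assms(1,2) that unfolding spec_order_total_def by blast
  have trans: "spec_le X x z" if "spec_le X x y" "spec_le X y z" for x y z
    using spec_le_trans that .
  show "eventually P (upper_tails X S) \<longleftrightarrow> (\<exists>y\<in>S. \<forall>z\<in>S. spec_le X y z \<longrightarrow> P z)"
    by (rule eventually_tail_filter[OF assms(3) total trans])
  show "upper_tails X S \<noteq> bot"
    by (rule tail_filter_not_bot[OF assms(3) total trans])
  show "eventually P (lower_tails X S) \<longleftrightarrow> (\<exists>y\<in>S. \<forall>z\<in>S. spec_le X z y \<longrightarrow> P z)"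
    by (rule eventually_tail_filter[OF assms(3)]) (use total trans in blast)+
  show "lower_tails X S \<noteq> bot"
    by (rule tail_filter_not_bot[OF assms(3)]) (use total trans in blast)+
qed

section \<open>Constructible topology\<close>

lemma topspace_cons_topology [simp]: "topspace (cons_topology X) = topspace X"
proof -
  have "topspace X \<in> {topspace X - U | U. openin X U \<and> compactin X U}"
    by (rule CollectI, rule exI[of _ "{}"]) auto
  then show ?thesis
    unfolding cons_topology_def topology_generated_by_topspace
    using openin_subset by blast
qed

lemma
  assumes "openin X V" and "compactin X V"
  shows openin_cons_topology: "openin (cons_topology X) V"
    and openin_cons_topology_complement: "openin (cons_topology X) (topspace X - V)"
  using assms unfolding cons_topology_def openin_topology_generated_by_iff
  by (auto intro: generate_topology_on.Basis)

lemma limitin_cons_topology: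
  assumes "l \<in> topspace X"
    and "\<And>V. openin X V \<Longrightarrow> compactin X V \<Longrightarrow> l \<in> V \<Longrightarrow> eventually (\<lambda>x. f x \<in> V) F"
    and "\<And>V. openin X V \<Longrightarrow> compactin X V \<Longrightarrow> l \<notin> V \<Longrightarrow>
           eventually (\<lambda>x. f x \<in> topspace X - V) F"
  shows "limitin (cons_topology X) f l F"
proof -
  have "l \<in> topspace X - {}" "openin X {}" "compactin X {}"
    using assms(1) by auto
  then show ?thesis
    unfolding cons_topology_def
    by (intro limitin_topology_generated_by) (use assms in blast)+
qed

lemma compactin_open_with_greatest:
  assumes "openin X V" and "m \<in> V" and "\<And>v. v \<in> V \<Longrightarrow> spec_le X v m"
  shows "compactin X V"
  unfolding compactin_def
proof (intro conjI allI impI)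
  show "V \<subseteq> topspace X" using assms(1) openin_subset by auto
  fix \<U> assume \<U>: "(\<forall>U\<in>\<U>. openin X U) \<and> V \<subseteq> \<Union>\<U>"
  then obtain U where "U \<in> \<U>" "m \<in> U" using assms(2) by auto
  moreover have "openin X U" using \<U> \<open>U \<in> \<U>\<close> by blast
  then have "V \<subseteq> U" using openin_spec_le_down[OF _ assms(3) \<open>m \<in> U\<close>] by blast
  ultimately show "\<exists>\<F>. finite \<F> \<and> \<F> \<subseteq> \<U> \<and> V \<subseteq> \<Union>\<F>"
    by (intro exI[of _ "{U}"]) auto
qed

lemma sup_in_compact_open:
  assumes total: "spec_order_total X"
    and V: "openin X V" "compactin X V" and S: "S \<subseteq> V" "S \<noteq> {}" and s: "is_sup_in X S s"
  shows "s \<in> V"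
proof (rule ccontr)
  assume "s \<notin> V"
  have Vt: "V \<subseteq> topspace X" using V(1) openin_subset by blast
  have St: "S \<subseteq> topspace X" using S Vt by blast
  \<comment> \<open>If \<open>s \<notin> V\<close>, the sets of points not above some \<open>y \<in> S\<close> cover \<open>V\<close>; no finite subcover
    can exist, since some element of \<open>S\<close> lies above finitely many given elements of \<open>S\<close>.\<close>
  define not_above where "not_above y = topspace X - X closure_of {y}" for y
  have "openin X U" if "U \<in> not_above ` S" for U
    using that unfolding not_above_def by (auto intro: openin_diff)
  moreover have "V \<subseteq> \<Union>(not_above ` S)"
  proof
    fix v assume "v \<in> V"
    then have "\<not> spec_le X s v" using \<open>s \<notin> V\<close> openin_spec_le_down[OF V(1)] by blast
    then obtain y where "y \<in> S" "\<not> spec_le X y v" using s \<open>v \<in> V\<close> Vt unfolding is_sup_in_def by blast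
    then show "v \<in> \<Union>(not_above ` S)" using \<open>v \<in> V\<close> Vt St unfolding not_above_def spec_le_def by blast
  qed
  ultimately obtain \<F> where \<F>: "finite \<F>" "\<F> \<subseteq> not_above ` S" "V \<subseteq> \<Union>\<F>"
    using compactinD[OF V(2), of "not_above ` S"] by blast
  then obtain T where T: "T \<subseteq> S" "finite T" "\<F> = not_above ` T"
    using finite_subset_image[OF \<F>(1,2)] by blast
  have "eventually (\<lambda>z. spec_le X y z) (upper_tails X S)" if "y \<in> S" for y
    unfolding eventually_upper_tails[OF total St S(2)] using that by blast
  then have "eventually (\<lambda>z. \<forall>y\<in>T. spec_le X y z) (upper_tails X S)"
    using T(1,2) by (intro eventually_ball_finite) auto
  moreover have "eventually (\<lambda>z. z \<in> S) (upper_tails X S)"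
    unfolding eventually_upper_tails[OF total St S(2)] using S(2) by blast
  ultimately obtain m where "m \<in> S" "\<forall>y\<in>T. spec_le X y m"
    using eventually_happens'[OF upper_tails_not_bot[OF total St S(2)] eventually_conj] by blast
  moreover from this obtain y where "y \<in> T" "m \<in> not_above y" using T(3) \<F>(3) S(1) by blast
  ultimately show False unfolding not_above_def spec_le_def by blast
qed

lemma sup_in_cons_closure_of:
  assumes total: "spec_order_total X" and S: "S \<noteq> {}" and s: "is_sup_in X S s"
  shows "s \<in> cons_topology X closure_of S"
proof -
  have St: "S \<subseteq> topspace X" using s unfolding is_sup_in_def spec_le_def by blast
  note tails = eventually_upper_tails[OF total St S]
  have "limitin (cons_topology X) (\<lambda>x. x) s (upper_tails X S)"
  proof (rule limitin_cons_topology)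
    show "s \<in> topspace X" using s unfolding is_sup_in_def by blast
  next
    fix V assume V: "openin X V" "compactin X V" "s \<in> V"
    have "S \<subseteq> V" using s openin_spec_le_down[OF V(1) _ V(3)] unfolding is_sup_in_def by blast
    then show "eventually (\<lambda>x. x \<in> V) (upper_tails X S)"
      unfolding tails using S by blast
  next
    fix V assume V: "openin X V" "compactin X V" "s \<notin> V"
    then have "\<not> S \<subseteq> V" using sup_in_compact_open[OF total V(1,2) _ S s] by blast
    then obtain y where "y \<in> S" "y \<notin> V" by blast
    then have "\<forall>z\<in>S. spec_le X y z \<longrightarrow> z \<in> topspace X - V"
      using St openin_spec_le_down[OF V(1), of y] by blast
    then show "eventually (\<lambda>x. x \<in> topspace X - V) (upper_tails X S)"
      unfolding tails using \<open>y \<in> S\<close> by blast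
  qed
  moreover have "eventually (\<lambda>x. x \<in> S) (upper_tails X S)"
    unfolding tails using S by blast
  ultimately show ?thesis
    by (rule limitin_imp_in_closure_of[OF _ _ upper_tails_not_bot[OF total St S]])
qed

lemma inf_in_cons_closure_of:
  assumes total: "spec_order_total X" and S: "S \<noteq> {}" and i: "is_inf_in X S i"
    and closure: "i \<in> X closure_of S"
  shows "i \<in> cons_topology X closure_of S"
proof -
  have St: "S \<subseteq> topspace X" using i unfolding is_inf_in_def spec_le_def by blast
  note tails = eventually_lower_tails[OF total St S]
  have "limitin (cons_topology X) (\<lambda>x. x) i (lower_tails X S)"
  proof (rule limitin_cons_topology)
    show "i \<in> topspace X" using i unfolding is_inf_in_def by blast
  next
    fix V assume V: "openin X V" "compactin X V" "i \<in> V"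
    then obtain y where "y \<in> S" "y \<in> V" using closure unfolding in_closure_of by blast
    then have "\<forall>z\<in>S. spec_le X z y \<longrightarrow> z \<in> V" using openin_spec_le_down[OF V(1)] by blast
    then show "eventually (\<lambda>x. x \<in> V) (lower_tails X S)"
      unfolding tails using \<open>y \<in> S\<close> by blast
  next
    fix V assume V: "openin X V" "compactin X V" "i \<notin> V"
    have "z \<notin> V" if "z \<in> S" for z
      using i that openin_spec_le_down[OF V(1), of i z] V(3) unfolding is_inf_in_def by blast
    then have "S \<subseteq> topspace X - V" using St by blast
    then show "eventually (\<lambda>x. x \<in> topspace X - V) (lower_tails X S)"
      unfolding tails using S by blast
  qed
  moreover have "eventually (\<lambda>x. x \<in> S) (lower_tails X S)"
    unfolding tails using S by blast
  ultimately show ?thesis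
    by (rule limitin_imp_in_closure_of[OF _ _ lower_tails_not_bot[OF total St S]])
qed

(* The properties of Spec R with totally ordered primes that the argument uses; they are
   invariant under homeomorphism. *)
locale complete_chain_space =
  fixes X :: "'a topology"
  assumes total: "spec_order_total X"
    and t0: "t0_space X"
    and sup_exists: "\<And>S. S \<subseteq> topspace X \<Longrightarrow> S \<noteq> {} \<Longrightarrow> \<exists>s. is_sup_in X S s"
    and inf_exists: "\<And>S. S \<subseteq> topspace X \<Longrightarrow> S \<noteq> {} \<Longrightarrow> \<exists>i. is_inf_in X S i"
    and inf_in_closure: "\<And>S i. S \<noteq> {} \<Longrightarrow> is_inf_in X S i \<Longrightarrow> i \<in> X closure_of S"
    and compact_open_separation:
      "\<And>x y. x \<in> topspace X \<Longrightarrow> y \<in> topspace X \<Longrightarrow> \<not> spec_le X y x \<Longrightarrow>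
         \<exists>V. openin X V \<and> compactin X V \<and> x \<in> V \<and> y \<notin> V"
begin

lemma spec_le_antisym: "spec_le X x y \<Longrightarrow> spec_le X y x \<Longrightarrow> x = y"
  using t0 unfolding t0_space_iff_spec_le_antisym by blast

lemma cons_neighbourhood_avoiding_below:
  assumes x: "x \<in> topspace X" "x \<notin> sups_of X Y"
  shows "\<exists>W. openin (cons_topology X) W \<and> x \<in> W \<and> (\<forall>y\<in>Y. spec_le X y x \<longrightarrow> y \<notin> W)"
proof (cases "\<exists>y\<in>Y. spec_le X y x")
  case False
  then show ?thesis using x(1) openin_topspace[of "cons_topology X"] by auto
next
  case True
  define S where "S = {y \<in> Y. spec_le X y x}"
  have S: "S \<subseteq> topspace X" "S \<noteq> {}" using True unfolding S_def spec_le_def by auto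
  then obtain a where a: "is_sup_in X S a" using sup_exists by blast
  have "spec_le X a x" using a x(1) unfolding is_sup_in_def S_def by blast
  moreover have "a \<noteq> x"
  proof
    assume "a = x"
    have "S \<subseteq> Y" unfolding S_def by blast
    then have "x \<in> sups_of X Y" using a S(2) \<open>a = x\<close> unfolding sups_of_def by blast
    then show False using x(2) by blast
  qed
  ultimately have "\<not> spec_le X x a" using spec_le_antisym by blast
  then obtain V where V: "openin X V" "compactin X V" "a \<in> V" "x \<notin> V"
    using compact_open_separation[of a x] a x(1) unfolding is_sup_in_def by blast
  have "y \<in> V" if "y \<in> S" for y
    using openin_spec_le_down[OF V(1) _ V(3), of y] a that unfolding is_sup_in_def by blast
  then show ?thesis
    using openin_cons_topology_complement[OF V(1,2)] V(4) x(1) unfolding S_def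
    by (intro exI[of _ "topspace X - V"]) auto
qed

lemma cons_neighbourhood_avoiding_above:
  assumes x: "x \<in> topspace X" "x \<notin> infs_of X Y"
  shows "\<exists>W. openin (cons_topology X) W \<and> x \<in> W \<and> (\<forall>y\<in>Y. spec_le X x y \<longrightarrow> y \<notin> W)"
proof (cases "\<exists>y\<in>Y. spec_le X x y")
  case False
  then show ?thesis using x(1) openin_topspace[of "cons_topology X"] by auto
next
  case True
  define S where "S = {y \<in> Y. spec_le X x y}"
  have S: "S \<subseteq> topspace X" "S \<noteq> {}" using True unfolding S_def spec_le_def by auto
  then obtain b where b: "is_inf_in X S b" using inf_exists by blast
  have "spec_le X x b" using b x(1) unfolding is_inf_in_def S_def by blast
  moreover have "b \<noteq> x"
  proof
    assume "b = x"
    have "S \<subseteq> Y" unfolding S_def by blast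
    then have "x \<in> infs_of X Y" using b S(2) \<open>b = x\<close> unfolding infs_of_def by blast
    then show False using x(2) by blast
  qed
  ultimately have "\<not> spec_le X b x" using spec_le_antisym by blast
  then obtain V where V: "openin X V" "compactin X V" "x \<in> V" "b \<notin> V"
    using compact_open_separation[of x b] b x(1) unfolding is_inf_in_def by blast
  have "y \<notin> V" if "y \<in> S" for y
    using openin_spec_le_down[OF V(1), of b y] V(4) b that unfolding is_inf_in_def by blast
  then show ?thesis
    using openin_cons_topology[OF V(1,2)] V(3) unfolding S_def
    by (intro exI[of _ V]) auto
qed

lemma sups_infs_subset_cons_closure_of:
  "sups_of X Y \<union> infs_of X Y \<subseteq> cons_topology X closure_of Y"
proof
  fix s assume "s \<in> sups_of X Y \<union> infs_of X Y"
  then obtain S where S: "S \<subseteq> Y" "S \<noteq> {}" and sup_or_inf: "is_sup_in X S s \<or> is_inf_in X S s"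
    unfolding sups_of_def infs_of_def by blast
  from sup_or_inf have "s \<in> cons_topology X closure_of S"
  proof
    assume "is_sup_in X S s"
    then show ?thesis by (rule sup_in_cons_closure_of[OF total S(2)])
  next
    assume inf: "is_inf_in X S s"
    show ?thesis by (rule inf_in_cons_closure_of[OF total S(2) inf inf_in_closure[OF S(2) inf]])
  qed
  then show "s \<in> cons_topology X closure_of Y"
    using closure_of_mono[OF S(1)] by blast
qed

lemma cons_closure_of_subset_sups_infs:
  assumes "Y \<subseteq> topspace X"
  shows "cons_topology X closure_of Y \<subseteq> sups_of X Y \<union> infs_of X Y"
proof
  fix x assume x: "x \<in> cons_topology X closure_of Y"
  show "x \<in> sups_of X Y \<union> infs_of X Y"
  proof (rule ccontr)
    assume x_not: "x \<notin> sups_of X Y \<union> infs_of X Y"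
    have xt: "x \<in> topspace X"
      using x closure_of_subset_topspace[of "cons_topology X" Y] by auto
    obtain W1 where
      W1: "openin (cons_topology X) W1" "x \<in> W1" "\<forall>y\<in>Y. spec_le X y x \<longrightarrow> y \<notin> W1"
      using cons_neighbourhood_avoiding_below[OF xt] x_not by blast
    obtain W2 where
      W2: "openin (cons_topology X) W2" "x \<in> W2" "\<forall>y\<in>Y. spec_le X x y \<longrightarrow> y \<notin> W2"
      using cons_neighbourhood_avoiding_above[OF xt] x_not by blast
    have "openin (cons_topology X) (W1 \<inter> W2)" "x \<in> W1 \<inter> W2"
      using W1(1,2) W2(1,2) by auto
    then obtain y where "y \<in> Y" "y \<in> W1 \<inter> W2"
      using x unfolding in_closure_of by blast
    moreover have "spec_le X y x \<or> spec_le X x y"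
      using total xt assms \<open>y \<in> Y\<close> unfolding spec_order_total_def by blast
    ultimately show False using W1(3) W2(3) by blast
  qed
qed

lemma cons_closure_of_eq:
  "Y \<subseteq> topspace X \<Longrightarrow> cons_topology X closure_of Y = sups_of X Y \<union> infs_of X Y"
  using cons_closure_of_subset_sups_infs sups_infs_subset_cons_closure_of by blast

lemma closedin_cons_topology_iff:
  assumes "Y \<subseteq> topspace X"
  shows "closedin (cons_topology X) Y \<longleftrightarrow>
           (\<forall>S. S \<subseteq> Y \<and> S \<noteq> {} \<longrightarrow>
              (\<forall>s. is_sup_in X S s \<longrightarrow> s \<in> Y) \<and> (\<forall>s. is_inf_in X S s \<longrightarrow> s \<in> Y))"
proof -
  have "is_sup_in X {y} y" if "y \<in> Y" for y
    using that assms spec_le_refl[of y X] unfolding is_sup_in_def by auto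
  then have "Y \<subseteq> sups_of X Y"
    unfolding sups_of_def by blast
  then have "closedin (cons_topology X) Y \<longleftrightarrow> sups_of X Y \<union> infs_of X Y \<subseteq> Y"
    using cons_closure_of_eq[OF assms] closure_of_eq[of "cons_topology X" Y] by auto
  also have "\<dots> \<longleftrightarrow> (\<forall>S. S \<subseteq> Y \<and> S \<noteq> {} \<longrightarrow>
              (\<forall>s. is_sup_in X S s \<longrightarrow> s \<in> Y) \<and> (\<forall>s. is_inf_in X S s \<longrightarrow> s \<in> Y))"
    unfolding sups_of_def infs_of_def by blast
  finally show ?thesis .
qed

end

section \<open>Spectra with totally ordered primes\<close>

lemma Spec_subset_carrier: "P \<in> Spec R \<Longrightarrow> P \<subseteq> carrier R"
  unfolding Spec_def using primeideal.axioms(1) ideal.axioms(1) additive_subgroup.a_subset by blast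

lemma one_notin_Spec: "P \<in> Spec R \<Longrightarrow> \<one>\<^bsub>R\<^esub> \<notin> P"
  unfolding Spec_def
  by (metis mem_Collect_eq primeideal.I_notcarr primeideal.axioms(1) ideal.one_imp_carrier)

lemma topspace_zariski:
  assumes "cring R"
  shows "topspace (zariski_topology R) = Spec R"
proof -
  have "\<one>\<^bsub>R\<^esub> \<in> carrier R"
    using assms cring.axioms(1) ring.ring_simprules(6) by blast
  then have "Spec R \<subseteq> \<Union>{{P \<in> Spec R. f \<notin> P} | f. f \<in> carrier R}"
    using one_notin_Spec by blast
  then show ?thesis
    unfolding zariski_topology_def topology_generated_by_topspace by blast
qed

lemma openin_zariski_basic:
  "f \<in> carrier R \<Longrightarrow> openin (zariski_topology R) {P \<in> Spec R. f \<notin> P}"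
  unfolding zariski_topology_def openin_topology_generated_by_iff
  by (rule generate_topology_on.Basis) blast

lemma limitin_zariski:
  assumes "Q \<in> Spec R"
    and "\<And>f. f \<in> carrier R \<Longrightarrow> f \<notin> Q \<Longrightarrow> eventually (\<lambda>x. g x \<in> Spec R \<and> f \<notin> g x) F"
  shows "limitin (zariski_topology R) g Q F"
  unfolding zariski_topology_def
proof (rule limitin_topology_generated_by)
  have "Q \<noteq> carrier R" "Q \<subseteq> carrier R"
    using assms(1) primeideal.I_notcarr[of Q R] Spec_subset_carrier[OF assms(1)] by (auto simp: Spec_def)
  then obtain f where "f \<in> carrier R" "f \<notin> Q" by blast
  then show "Q \<in> \<Union>{{P \<in> Spec R. f \<notin> P} | f. f \<in> carrier R}"
    using assms(1) by blast
qed (use assms(2) in auto)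

lemma spec_le_zariski:
  assumes "cring R"
  shows "spec_le (zariski_topology R) P Q \<longleftrightarrow> P \<in> Spec R \<and> Q \<in> Spec R \<and> P \<subseteq> Q"
proof
  assume le: "spec_le (zariski_topology R) P Q"
  then have PQ: "P \<in> Spec R" "Q \<in> Spec R"
    unfolding spec_le_def topspace_zariski[OF assms] by auto
  have "f \<in> Q" if "f \<in> P" for f
  proof (rule ccontr)
    assume "f \<notin> Q"
    moreover have "f \<in> carrier R" using that Spec_subset_carrier[OF PQ(1)] by blast
    ultimately have "P \<in> {P \<in> Spec R. f \<notin> P}"
      using openin_spec_le_down[OF openin_zariski_basic le] PQ(2) by blast
    then show False using that by blast
  qed
  then show "P \<in> Spec R \<and> Q \<in> Spec R \<and> P \<subseteq> Q" using PQ by blast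
next
  assume PQ: "P \<in> Spec R \<and> Q \<in> Spec R \<and> P \<subseteq> Q"
  then have "limitin (zariski_topology R) (\<lambda>x. x) Q (principal {P})"
    by (intro limitin_zariski) (auto simp: eventually_principal)
  then show "spec_le (zariski_topology R) P Q"
    unfolding spec_le_iff_openin topspace_zariski[OF assms]
    using PQ by (auto simp: limitin_def eventually_principal)
qed

lemma t0_space_zariski: "cring R \<Longrightarrow> t0_space (zariski_topology R)"
  unfolding t0_space_iff_spec_le_antisym by (auto simp: spec_le_zariski)

lemma Spec_Union_chain:
  fixes R (structure)
  assumes R: "cring R" and S: "S \<subseteq> Spec R" "S \<noteq> {}"
    and chain: "\<forall>P\<in>S. \<forall>Q\<in>S. P \<subseteq> Q \<or> Q \<subseteq> P"
  shows "\<Union>S \<in> Spec R"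
proof -
  interpret cring R by fact
  have "subset.chain {I. ideal I R} S"
    using S(1) chain primeideal.axioms(1)[of _ R] unfolding Spec_def by (auto simp: pred_on.chain_def)
  then have ideal: "ideal (\<Union>S) R" using chain_Union_is_ideal[of S] S(2) by simp
  have "carrier R \<noteq> \<Union>S" using one_notin_Spec S(1) one_closed by blast
  then show ?thesis unfolding Spec_def
  proof (intro CollectI primeidealI[OF ideal R])
    fix a b assume ab: "a \<in> carrier R" "b \<in> carrier R" "a \<otimes> b \<in> \<Union>S"
    then obtain P where P: "P \<in> S" "a \<otimes> b \<in> P" by blast
    then have "a \<in> P \<or> b \<in> P"
      using S(1) primeideal.I_prime[OF _ ab(1,2)] unfolding Spec_def by blast
    then show "a \<in> \<Union>S \<or> b \<in> \<Union>S" using P(1) by blast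
  qed
qed

lemma Spec_Inter_chain:
  fixes R (structure)
  assumes R: "cring R" and S: "S \<subseteq> Spec R" "S \<noteq> {}"
    and chain: "\<forall>P\<in>S. \<forall>Q\<in>S. P \<subseteq> Q \<or> Q \<subseteq> P"
  shows "\<Inter>S \<in> Spec R"
proof -
  interpret cring R by fact
  have ideal: "ideal (\<Inter>S) R"
    by (rule i_Intersect) (use S primeideal.axioms(1) in \<open>auto simp: Spec_def\<close>)
  have "carrier R \<noteq> \<Inter>S" using one_notin_Spec S one_closed by blast
  then show ?thesis unfolding Spec_def
  proof (intro CollectI primeidealI[OF ideal R])
    fix a b assume ab: "a \<in> carrier R" "b \<in> carrier R" "a \<otimes> b \<in> \<Inter>S"
    show "a \<in> \<Inter>S \<or> b \<in> \<Inter>S"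
    proof (rule ccontr)
      assume "\<not> ?thesis"
      then obtain P Q where PQ: "P \<in> S" "a \<notin> P" "Q \<in> S" "b \<notin> Q" by blast
      with chain have "a \<notin> P \<inter> Q \<and> b \<notin> P \<inter> Q \<and> (P \<inter> Q = P \<or> P \<inter> Q = Q)" by blast
      moreover have "a \<otimes> b \<in> P \<inter> Q" using ab(3) PQ(1,3) by blast
      moreover have "primeideal P R" "primeideal Q R" using S(1) PQ(1,3) unfolding Spec_def by auto
      ultimately show False using primeideal.I_prime[OF _ ab(1,2)] by metis
    qed
  qed
qed

lemma Inter_in_closure_zariski:
  assumes R: "cring R" and S: "S \<subseteq> Spec R" "S \<noteq> {}"
    and chain: "\<forall>P\<in>S. \<forall>Q\<in>S. P \<subseteq> Q \<or> Q \<subseteq> P"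
  shows "\<Inter>S \<in> zariski_topology R closure_of S"
proof -
  let ?F = "tail_filter (\<lambda>P Q. Q \<subseteq> P) S"
  have ev: "eventually Prop ?F \<longleftrightarrow> (\<exists>P\<in>S. \<forall>Q\<in>S. Q \<subseteq> P \<longrightarrow> Prop Q)" for Prop
    by (rule eventually_tail_filter[OF S(2)]) (use chain in blast)+
  have "limitin (zariski_topology R) (\<lambda>P. P) (\<Inter>S) ?F"
  proof (rule limitin_zariski)
    show "\<Inter>S \<in> Spec R" by (rule Spec_Inter_chain[OF R S chain])
  next
    fix f assume "f \<notin> \<Inter>S"
    then obtain P where "P \<in> S" "f \<notin> P" by blast
    then show "eventually (\<lambda>Q. Q \<in> Spec R \<and> f \<notin> Q) ?F"
      unfolding ev using S(1) by blast
  qed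
  moreover have "eventually (\<lambda>Q. Q \<in> S) ?F"
    unfolding ev using S(2) by blast
  moreover have "?F \<noteq> bot"
    by (rule tail_filter_not_bot[OF S(2)]) (use chain in blast)+
  ultimately show ?thesis by (rule limitin_imp_in_closure_of)
qed

lemma compact_open_separation_zariski:
  assumes R: "cring R" and chain: "\<forall>P\<in>Spec R. \<forall>Q\<in>Spec R. P \<subseteq> Q \<or> Q \<subseteq> P"
    and P: "P \<in> Spec R" and Q: "Q \<in> Spec R" "\<not> Q \<subseteq> P"
  shows "\<exists>V. openin (zariski_topology R) V \<and> compactin (zariski_topology R) V \<and> P \<in> V \<and> Q \<notin> V"
proof -
  obtain f where f: "f \<in> Q" "f \<notin> P" using Q(2) by blast
  have "f \<in> carrier R" using f(1) Spec_subset_carrier[OF Q(1)] by blast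
  define V where "V = {P \<in> Spec R. f \<notin> P}"
  have V: "openin (zariski_topology R) V" "V \<subseteq> Spec R" "P \<in> V" "Q \<notin> V"
    using openin_zariski_basic[OF \<open>f \<in> carrier R\<close>] P f unfolding V_def by auto
  have "\<Union>V \<in> Spec R"
    using Spec_Union_chain[OF R V(2)] V(2,3) chain by blast
  then have "\<Union>V \<in> V" unfolding V_def by blast
  moreover have "spec_le (zariski_topology R) W (\<Union>V)" if "W \<in> V" for W
    using that V(2) \<open>\<Union>V \<in> Spec R\<close> by (auto simp: spec_le_zariski[OF R])
  ultimately have "compactin (zariski_topology R) V"
    by (rule compactin_open_with_greatest[OF V(1)])
  then show ?thesis using V(1,3,4) by blast
qed

lemma complete_chain_space_zariski:
  assumes R: "cring R" and total: "spec_order_total (zariski_topology R)"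
  shows "complete_chain_space (zariski_topology R)"
proof unfold_locales
  have chain: "\<forall>P\<in>S. \<forall>Q\<in>S. P \<subseteq> Q \<or> Q \<subseteq> P" if "S \<subseteq> Spec R" for S
    using that total unfolding spec_order_total_def topspace_zariski[OF R] spec_le_zariski[OF R] by blast
  have sup: "is_sup_in (zariski_topology R) S (\<Union>S)"
    and inf: "is_inf_in (zariski_topology R) S (\<Inter>S)" if "S \<subseteq> Spec R" "S \<noteq> {}" for S
    using that Spec_Union_chain[OF R that chain[OF that(1)]] Spec_Inter_chain[OF R that chain[OF that(1)]]
    unfolding is_sup_in_def is_inf_in_def topspace_zariski[OF R] spec_le_zariski[OF R] by blast+
  show "spec_order_total (zariski_topology R)" by (rule total)
  show "t0_space (zariski_topology R)" by (rule t0_space_zariski[OF R])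
  show "\<exists>s. is_sup_in (zariski_topology R) S s" "\<exists>i. is_inf_in (zariski_topology R) S i"
    if "S \<subseteq> topspace (zariski_topology R)" "S \<noteq> {}" for S
    using sup inf that unfolding topspace_zariski[OF R] by blast+
  show "i \<in> zariski_topology R closure_of S"
    if S: "S \<noteq> {}" and i: "is_inf_in (zariski_topology R) S i" for S i
  proof -
    have "S \<subseteq> Spec R" using i unfolding is_inf_in_def spec_le_zariski[OF R] by blast
    then have "i = \<Inter>S"
      using inf[OF _ S] i unfolding is_inf_in_def spec_le_zariski[OF R] by blast
    then show ?thesis
      using Inter_in_closure_zariski[OF R \<open>S \<subseteq> Spec R\<close> S chain[OF \<open>S \<subseteq> Spec R\<close>]] by blast
  qed
  show "\<exists>V. openin (zariski_topology R) V \<and> compactin (zariski_topology R) V \<and> x \<in> V \<and> y \<notin> V"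
    if "x \<in> topspace (zariski_topology R)" "y \<in> topspace (zariski_topology R)"
      "\<not> spec_le (zariski_topology R) y x" for x y
    using compact_open_separation_zariski[OF R chain[OF order_refl]] that
    unfolding topspace_zariski[OF R] spec_le_zariski[OF R] by blast
qed

section \<open>Invariance under homeomorphisms\<close>

lemma homeomorphic_mapsD:
  assumes "homeomorphic_maps X Y f g"
  shows "x \<in> topspace X \<Longrightarrow> f x \<in> topspace Y" and "y \<in> topspace Y \<Longrightarrow> g y \<in> topspace X"
    and "x \<in> topspace X \<Longrightarrow> g (f x) = x" and "y \<in> topspace Y \<Longrightarrow> f (g y) = y"
  using assms unfolding homeomorphic_maps_def continuous_map_def by blast+

lemma homeomorphic_maps_image_inverse:
  assumes "homeomorphic_maps X Y f g" and "S \<subseteq> topspace X"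
  shows "g ` f ` S = S"
proof -
  have "g ` f ` S = (\<lambda>x. g (f x)) ` S" by (simp add: image_image)
  also have "\<dots> = S"
    using homeomorphic_mapsD(3)[OF assms(1)] assms(2) by (simp add: subset_iff)
  finally show ?thesis .
qed

lemma spec_le_homeomorphic_maps:
  assumes "homeomorphic_maps X Y f g" and "x \<in> topspace X" and "y \<in> topspace Y"
  shows "spec_le Y (f x) y \<longleftrightarrow> spec_le X x (g y)"
    and "spec_le Y y (f x) \<longleftrightarrow> spec_le X (g y) x"
proof -
  have f: "continuous_map X Y f" and g: "continuous_map Y X g"
    using assms(1) unfolding homeomorphic_maps_def by auto
  have "g (f x) = x" "f (g y) = y"
    using homeomorphic_mapsD[OF assms(1)] assms(2,3) by auto
  then show "spec_le Y (f x) y \<longleftrightarrow> spec_le X x (g y)" and "spec_le Y y (f x) \<longleftrightarrow> spec_le X (g y) x"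
    using continuous_map_spec_le[OF f] continuous_map_spec_le[OF g] by metis+
qed

lemma is_sup_in_homeomorphic_maps:
  assumes fg: "homeomorphic_maps X Y f g" and s: "is_sup_in X S s"
  shows "is_sup_in Y (f ` S) (f s)"
proof -
  note fgD = homeomorphic_mapsD[OF fg] and le = spec_le_homeomorphic_maps(1)[OF fg]
  have St: "S \<subseteq> topspace X" and st: "s \<in> topspace X"
    using s unfolding is_sup_in_def spec_le_def by auto
  have "spec_le Y (f y) (f s)" if "y \<in> S" for y
    using le[of y "f s"] s that St st fgD unfolding is_sup_in_def by auto
  moreover have "spec_le Y (f s) z" if z: "z \<in> topspace Y" "\<forall>y\<in>f ` S. spec_le Y y z" for z
  proof -
    have "spec_le X y (g z)" if "y \<in> S" for y
      using le[of y z] that St z by blast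
    then have "spec_le X s (g z)" using s fgD(2)[OF z(1)] unfolding is_sup_in_def by blast
    then show ?thesis using le[OF st z(1)] by blast
  qed
  ultimately show ?thesis unfolding is_sup_in_def using fgD(1)[OF st] by blast
qed

lemma is_inf_in_homeomorphic_maps:
  assumes fg: "homeomorphic_maps X Y f g" and s: "is_inf_in X S s"
  shows "is_inf_in Y (f ` S) (f s)"
proof -
  note fgD = homeomorphic_mapsD[OF fg] and le = spec_le_homeomorphic_maps(2)[OF fg]
  have St: "S \<subseteq> topspace X" and st: "s \<in> topspace X"
    using s unfolding is_inf_in_def spec_le_def by auto
  have "spec_le Y (f s) (f y)" if "y \<in> S" for y
    using le[of y "f s"] s that St st fgD unfolding is_inf_in_def by auto
  moreover have "spec_le Y z (f s)" if z: "z \<in> topspace Y" "\<forall>y\<in>f ` S. spec_le Y z y" for z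
  proof -
    have "spec_le X (g z) y" if "y \<in> S" for y
      using le[of y z] that St z by blast
    then have "spec_le X (g z) s" using s fgD(2)[OF z(1)] unfolding is_inf_in_def by blast
    then show ?thesis using le[OF st z(1)] by blast
  qed
  ultimately show ?thesis unfolding is_inf_in_def using fgD(1)[OF st] by blast
qed

lemma spec_order_total_homeomorphic_space:
  assumes "X homeomorphic_space Y" and "spec_order_total X"
  shows "spec_order_total Y"
  unfolding spec_order_total_def
proof (intro ballI)
  obtain f g where fg: "homeomorphic_maps X Y f g"
    using assms(1) unfolding homeomorphic_space_def by blast
  note fgD = homeomorphic_mapsD[OF fg]
  fix y z assume yz: "y \<in> topspace Y" "z \<in> topspace Y"
  then have "spec_le X (g y) (g z) \<or> spec_le X (g z) (g y)"
    using assms(2) fgD(2) unfolding spec_order_total_def by blast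
  then show "spec_le Y y z \<or> spec_le Y z y"
    using spec_le_homeomorphic_maps(2)[OF fg fgD(2) yz(2)] spec_le_homeomorphic_maps(2)[OF fg fgD(2) yz(1)]
      fgD(4) yz by metis
qed

lemma compact_open_separation_homeomorphic_maps:
  assumes fg: "homeomorphic_maps X Y f g" and x: "x \<in> topspace X" and y: "y \<in> topspace X"
    and V: "openin Y V" "compactin Y V" "f x \<in> V" "f y \<notin> V"
  shows "\<exists>U. openin X U \<and> compactin X U \<and> x \<in> U \<and> y \<notin> U"
proof (intro exI conjI)
  note fgD = homeomorphic_mapsD[OF fg]
  have Vt: "V \<subseteq> topspace Y" using V(1) openin_subset by blast
  have g: "homeomorphic_map Y X g" using fg unfolding homeomorphic_maps_map by blast
  show "openin X (g ` V)" "compactin X (g ` V)"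
    using V(1,2) homeomorphic_map_openness[OF g Vt] homeomorphic_map_compactness[OF g Vt] by blast+
  show "x \<in> g ` V" using V(3) fgD(3)[OF x] by force
  show "y \<notin> g ` V" using V(4) Vt fgD(4) by force
qed

lemma complete_chain_space_homeomorphic_space:
  assumes "X homeomorphic_space Y" and "complete_chain_space Y"
  shows "complete_chain_space X"
proof -
  interpret Y: complete_chain_space Y by fact
  obtain f g where fg: "homeomorphic_maps X Y f g"
    using assms(1) unfolding homeomorphic_space_def by blast
  have gf: "homeomorphic_maps Y X g f" using fg homeomorphic_maps_sym by blast
  note fgD = homeomorphic_mapsD[OF fg]
  have fS: "f ` S \<subseteq> topspace Y" if "S \<subseteq> topspace X" for S
    using fgD(1) that by blast
  show ?thesis
  proof unfold_locales
    show "spec_order_total X"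
      by (rule spec_order_total_homeomorphic_space[OF homeomorphic_space_sym[THEN iffD1, OF assms(1)] Y.total])
    show "t0_space X" using homeomorphic_t0_space[OF assms(1)] Y.t0 by blast
  next
    fix S assume S: "S \<subseteq> topspace X" "S \<noteq> {}"
    then have fS_ne: "f ` S \<noteq> {}" by blast
    note inverse = homeomorphic_maps_image_inverse[OF fg S(1)]
    obtain t where "is_sup_in Y (f ` S) t" using Y.sup_exists[OF fS[OF S(1)] fS_ne] by blast
    then have "is_sup_in X (g ` f ` S) (g t)" by (rule is_sup_in_homeomorphic_maps[OF gf])
    then show "\<exists>s. is_sup_in X S s" unfolding inverse by blast
    obtain u where "is_inf_in Y (f ` S) u" using Y.inf_exists[OF fS[OF S(1)] fS_ne] by blast
    then have "is_inf_in X (g ` f ` S) (g u)" by (rule is_inf_in_homeomorphic_maps[OF gf])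
    then show "\<exists>i. is_inf_in X S i" unfolding inverse by blast
  next
    fix S i assume S: "S \<noteq> {}" and i: "is_inf_in X S i"
    have St: "S \<subseteq> topspace X" and it: "i \<in> topspace X"
      using i unfolding is_inf_in_def spec_le_def by auto
    have "f i \<in> Y closure_of (f ` S)"
      by (rule Y.inf_in_closure[OF _ is_inf_in_homeomorphic_maps[OF fg i]]) (use S in blast)
    then have "g (f i) \<in> X closure_of (g ` f ` S)"
      using continuous_map_image_closure_subset[of Y X g "f ` S"] gf
      unfolding homeomorphic_maps_def by blast
    then show "i \<in> X closure_of S"
      unfolding homeomorphic_maps_image_inverse[OF fg St] fgD(3)[OF it] .
  next
    fix x y assume x: "x \<in> topspace X" and y: "y \<in> topspace X" and yx: "\<not> spec_le X y x"
    then have "\<not> spec_le Y (f y) (f x)"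
      using spec_le_homeomorphic_maps(1)[OF fg y fgD(1)[OF x]] fgD(3)[OF x] by simp
    then show "\<exists>V. openin X V \<and> compactin X V \<and> x \<in> V \<and> y \<notin> V"
      using Y.compact_open_separation[OF fgD(1)[OF x] fgD(1)[OF y]]
        compact_open_separation_homeomorphic_maps[OF fg x y] by blast
  qed
qed

theorem proposition3p3:
  fixes X :: "'a topology" and R :: "('r, 'm) ring_scheme" and Y :: "'a set"
  assumes "cring R"
    and "X homeomorphic_space zariski_topology R"
    and "spec_order_total X"
    and "Y \<subseteq> topspace X"
  shows "cons_topology X closure_of Y = sups_of X Y \<union> infs_of X Y \<and>
         (closedin (cons_topology X) Y \<longleftrightarrow>
           (\<forall>S. S \<subseteq> Y \<and> S \<noteq> {} \<longrightarrow>
              (\<forall>s. is_sup_in X S s \<longrightarrow> s \<in> Y) \<and> (\<forall>s. is_inf_in X S s \<longrightarrow> s \<in> Y)))"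
proof -
  have "spec_order_total (zariski_topology R)"
    using spec_order_total_homeomorphic_space[OF assms(2,3)] .
  then have "complete_chain_space (zariski_topology R)"
    using complete_chain_space_zariski[OF assms(1)] by blast
  then interpret complete_chain_space X
    using complete_chain_space_homeomorphic_space[OF assms(2)] by blast
  show ?thesis
    using cons_closure_of_eq[OF assms(4)] closedin_cons_topology_iff[OF assms(4)] by blast
qed

end
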